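(* Let $d\ge 2$ be an integer, and let $(B_\ell)$, $(C_\ell)$, $(D_\ell)$, indexed by even integers $\ell\ge 6$, satisfy for every even $\ell\ge 8$ \begin{align*} B_\ell &= (d-1)D_{\ell-2}+d\,C_{\ell-2},\\ C_\ell &= (d-1)D_{\ell-2}+d\,B_{\ell-2},\\ D_\ell &= (d^2-3d+3)D_{\ell-2}+(d-1)^2C_{\ell-2}+(d-1)^2B_{\ell-2}, \end{align*} with initial values $B_6=(d+1)d(d-1)^3$, $C_6=(d+1)d(d^3-2d^2+3d-1)$, $D_6=(d+1)d(d-1)^2(d^2-2d+3)$. Then for every even $\ell\ge 6$, \begin{align*} B_\ell &= d(d^2-d+1)^{\ell/2-1}+\tfrac12(-1)^{\ell/2-1}d(d-1)(d-2)^{\ell/2-1}+\tfrac12(-1)^{\ell/2}(d+1)d^{\ell/2},\\ C_\ell &= \tfrac12(-1)^{\ell/2-1}(d-1)d(d-2)^{\ell/2-1}+d(d^2-d+1)^{\ell/2-1}-\tfrac12(-1)^{\ell/2}d^{\ell/2}(d+1),\\ D_\ell &= (d-1)d\left((d^2-d+1)^{\ell/2-1}-(-1)^{\ell/2-1}(d-2)^{\ell/2-1}\right). \end{align*} *)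

theory Defs
  imports Complex_Main
begin

end

theory Submission
  imports Defs
begin

text \<open>
  Put \<open>b\<^sub>n = B\<^bsub>2n+2\<^esub>\<close>, and similarly for \<open>c\<^sub>n\<close> and \<open>d\<^sub>n\<close>. The step \<open>n \<mapsto> n+1\<close> is linear with
  eigenvalues \<open>d\<^sup>2 - d + 1\<close>, \<open>-(d - 2)\<close> and \<open>-d\<close>: the difference \<open>b\<^sub>n - c\<^sub>n\<close> is multiplied by \<open>-d\<close>,
  while \<open>b\<^sub>n + c\<^sub>n\<close> and \<open>d\<^sub>n\<close> evolve by a \<open>2\<times>2\<close> system with the other two eigenvalues.
  The claimed closed forms are therefore combinations of these three geometric sequences;
  one checks that they satisfy the recurrence and the initial values at \<open>n = 2\<close>, and the
  recurrence determines the sequences uniquely.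
\<close>

definition closed_B :: "'a::field_char_0 \<Rightarrow> nat \<Rightarrow> 'a" where
  "closed_B x n = x * (x\<^sup>2 - x + 1) ^ n + 1/2 * (-1) ^ n * x * (x - 1) * (x - 2) ^ n
                  + 1/2 * (-1) ^ Suc n * (x + 1) * x ^ Suc n"

definition closed_C :: "'a::field_char_0 \<Rightarrow> nat \<Rightarrow> 'a" where
  "closed_C x n = 1/2 * (-1) ^ n * (x - 1) * x * (x - 2) ^ n + x * (x\<^sup>2 - x + 1) ^ n
                  - 1/2 * (-1) ^ Suc n * x ^ Suc n * (x + 1)"

definition closed_D :: "'a::field_char_0 \<Rightarrow> nat \<Rightarrow> 'a" where
  "closed_D x n = (x - 1) * x * ((x\<^sup>2 - x + 1) ^ n - (-1) ^ n * (x - 2) ^ n)"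

lemma closed_B_Suc:
  "closed_B x (Suc n) = (x - 1) * closed_D x n + x * closed_C (x::'a::field_char_0) n"
  by (simp add: closed_B_def closed_C_def closed_D_def field_simps power2_eq_square)

lemma closed_C_Suc:
  "closed_C x (Suc n) = (x - 1) * closed_D x n + x * closed_B (x::'a::field_char_0) n"
  by (simp add: closed_B_def closed_C_def closed_D_def field_simps power2_eq_square)

lemma closed_D_Suc:
  "closed_D x (Suc n) = (x\<^sup>2 - 3 * x + 3) * closed_D x n
     + (x - 1)\<^sup>2 * closed_C x n + (x - 1)\<^sup>2 * closed_B (x::'a::field_char_0) n"
  by (simp add: closed_B_def closed_C_def closed_D_def field_simps power2_eq_square)

lemma closed_B_2: "closed_B x 2 = (x + 1) * x * (x - 1) ^ 3"
  and closed_C_2: "closed_C x 2 = (x + 1) * x * (x ^ 3 - 2 * x\<^sup>2 + 3 * x - 1)"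
  and closed_D_2: "closed_D x 2 = (x + 1) * x * (x - 1)\<^sup>2 * (x\<^sup>2 - 2 * x + 3)"
  for x :: "'a::field_char_0"
  by (simp_all add: closed_B_def closed_C_def closed_D_def field_simps
        power2_eq_square power3_eq_cube eval_nat_numeral)

lemma recurrence_eq_closed_forms:
  fixes x :: "'a::field_char_0" and b c d :: "nat \<Rightarrow> 'a"
  assumes rec_b: "\<And>n. n \<ge> 2 \<Longrightarrow> b (Suc n) = (x - 1) * d n + x * c n"
    and rec_c: "\<And>n. n \<ge> 2 \<Longrightarrow> c (Suc n) = (x - 1) * d n + x * b n"
    and rec_d: "\<And>n. n \<ge> 2 \<Longrightarrow>
        d (Suc n) = (x\<^sup>2 - 3 * x + 3) * d n + (x - 1)\<^sup>2 * c n + (x - 1)\<^sup>2 * b n"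
    and b2: "b 2 = closed_B x 2" and c2: "c 2 = closed_C x 2" and d2: "d 2 = closed_D x 2"
    and "n \<ge> 2"
  shows "b n = closed_B x n \<and> c n = closed_C x n \<and> d n = closed_D x n"
  using \<open>n \<ge> 2\<close>
proof (induction n rule: nat_induct_at_least)
  case base
  show ?case using b2 c2 d2 by simp
next
  case (Suc n)
  then show ?case
    by (simp add: rec_b rec_c rec_d closed_B_Suc closed_C_Suc closed_D_Suc)
qed

theorem lemma10:
  fixes d :: int and B C D :: "nat \<Rightarrow> real"
  assumes hd: "d \<ge> 2"
    and recB: "\<And>l. even l \<Longrightarrow> l \<ge> 8 \<Longrightarrow>
        B l = (of_int d - 1) * D (l - 2) + of_int d * C (l - 2)"
    and recC: "\<And>l. even l \<Longrightarrow> l \<ge> 8 \<Longrightarrow>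
        C l = (of_int d - 1) * D (l - 2) + of_int d * B (l - 2)"
    and recD: "\<And>l. even l \<Longrightarrow> l \<ge> 8 \<Longrightarrow>
        D l = (of_int d ^ 2 - 3 * of_int d + 3) * D (l - 2)
              + (of_int d - 1) ^ 2 * C (l - 2) + (of_int d - 1) ^ 2 * B (l - 2)"
    and B6: "B 6 = (of_int d + 1) * of_int d * (of_int d - 1) ^ 3"
    and C6: "C 6 = (of_int d + 1) * of_int d * (of_int d ^ 3 - 2 * of_int d ^ 2 + 3 * of_int d - 1)"
    and D6: "D 6 = (of_int d + 1) * of_int d * (of_int d - 1) ^ 2 * (of_int d ^ 2 - 2 * of_int d + 3)"
  shows "\<forall>l. even l \<and> l \<ge> 6 \<longrightarrow>
      B l = of_int d * (of_int d ^ 2 - of_int d + 1) ^ (l div 2 - 1)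
            + 1/2 * (-1) ^ (l div 2 - 1) * of_int d * (of_int d - 1) * (of_int d - 2) ^ (l div 2 - 1)
            + 1/2 * (-1) ^ (l div 2) * (of_int d + 1) * of_int d ^ (l div 2)
    \<and> C l = 1/2 * (-1) ^ (l div 2 - 1) * (of_int d - 1) * of_int d * (of_int d - 2) ^ (l div 2 - 1)
            + of_int d * (of_int d ^ 2 - of_int d + 1) ^ (l div 2 - 1)
            - 1/2 * (-1) ^ (l div 2) * of_int d ^ (l div 2) * (of_int d + 1)
    \<and> D l = (of_int d - 1) * of_int d * ((of_int d ^ 2 - of_int d + 1) ^ (l div 2 - 1)
            - (-1) ^ (l div 2 - 1) * (of_int d - 2) ^ (l div 2 - 1))"
proof -
  define x where "x = (of_int d :: real)"
  have step: "even (2 * Suc n + 2)" "2 * Suc n + 2 \<ge> 8" "2 * Suc n + 2 - 2 = 2 * n + 2"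
    if "n \<ge> 2" for n
    using that by auto
  have closed: "B (2 * n + 2) = closed_B x n \<and> C (2 * n + 2) = closed_C x n
      \<and> D (2 * n + 2) = closed_D x n" if "n \<ge> 2" for n
    by (rule recurrence_eq_closed_forms[OF _ _ _ _ _ _ that])
      (use B6 C6 D6 in \<open>simp_all add: recB recC recD step closed_B_2 closed_C_2 closed_D_2 x_def\<close>)
  have closed_l: "B l = closed_B x (l div 2 - 1) \<and> C l = closed_C x (l div 2 - 1)
      \<and> D l = closed_D x (l div 2 - 1)" if "even l" "l \<ge> 6" for l
  proof -
    obtain m where "l = 2 * m" using \<open>even l\<close> by blast
    with \<open>l \<ge> 6\<close> have "m - 1 \<ge> 2" and "l = 2 * (m - 1) + 2" by auto
    then show ?thesis using closed[of "m - 1"] by simp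
  qed
  have "Suc (l div 2 - 1) = l div 2" if "l \<ge> 6" for l :: nat
    using that by simp
  with closed_l show ?thesis
    by (simp add: closed_B_def closed_C_def closed_D_def x_def)
qed

end
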